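(* Let $F$ be a DQCNF and let $\varphi$ be an autarky of $F$. Then $\varphi * F$ is satisfiable if and only if $F$ is satisfiable.
   Context: A DQCNF $F$ consists of a finite set $X$ of universal variables, a finite set $Y$ of existential variables (disjoint from $X$), for each $y \in Y$ a dependency set $D(y) \subseteq X$, and a matrix which is a CNF, i.e. a finite set of clauses (finite disjunctions of literals) over the variables $X \cup Y$. $F$ is satisfiable if there are, for each $y \in Y$, boolean functions $f_y$ depending only on the variables in $D(y)$ such that, after substituting $f_y$ for $y$ (and $\neg f_y$ for $\overline{y}$) everywhere, every clause becomes a tautology, i.e. evaluates to true under every assignment of the universal variables. An autarky $\varphi$ of $F$ is a partial assignment that assigns to some set $\mathrm{var}(\varphi) \subseteq Y$ of existential variables boolean functions $\varphi(y)$ depending only on the variables in $D(y)$, such that every clause of $F$ containing a literal whose variable lies in $\mathrm{var}(\varphi)$ becomes a tautology after substituting $\varphi(y)$ for each $y \in \mathrm{var}(\varphi)$, i.e. evaluates to true under every assignment to all universal variables and all existential variables not in $\mathrm{var}(\varphi)$. The DQCNF $\varphi * F$ has the same variables and dependency sets as $F$, and its matrix is obtained from that of $F$ by removing all clauses containing a literal whose variable lies in $\mathrm{var}(\varphi)$ (these are exactly the clauses satisfied by $\varphi$). *)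

theory Defs
  imports Main
begin

datatype 'v lit = Pos 'v | Neg 'v

fun lit_var :: "'v lit \<Rightarrow> 'v" where
  "lit_var (Pos v) = v" | "lit_var (Neg v) = v"

fun lit_val :: "('v \<Rightarrow> bool) \<Rightarrow> 'v lit \<Rightarrow> bool" where
  "lit_val \<sigma> (Pos v) = \<sigma> v" | "lit_val \<sigma> (Neg v) = (\<not> \<sigma> v)"

type_synonym 'v clause = "'v lit set"

record 'v dqcnf =
  univ :: "'v set"
  exist :: "'v set"
  dep :: "'v \<Rightarrow> 'v set"
  matrix :: "'v clause set"

definition wf_dqcnf :: "'v dqcnf \<Rightarrow> bool" where
  "wf_dqcnf F \<longleftrightarrow> finite (univ F) \<and> finite (exist F) \<and> univ F \<inter> exist F = {}
     \<and> (\<forall>y\<in>exist F. dep F y \<subseteq> univ F)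
     \<and> finite (matrix F) \<and> (\<forall>C\<in>matrix F. finite C \<and> lit_var ` C \<subseteq> univ F \<union> exist F)"

definition depends_only :: "'v set \<Rightarrow> (('v \<Rightarrow> bool) \<Rightarrow> bool) \<Rightarrow> bool" where
  "depends_only S g \<longleftrightarrow> (\<forall>a b. (\<forall>x\<in>S. a x = b x) \<longrightarrow> g a = g b)"

definition satisfiable :: "'v dqcnf \<Rightarrow> bool" where
  "satisfiable F \<longleftrightarrow> (\<exists>f :: 'v \<Rightarrow> ('v \<Rightarrow> bool) \<Rightarrow> bool.
     (\<forall>y\<in>exist F. depends_only (dep F y) (f y)) \<and>
     (\<forall>C\<in>matrix F. \<forall>a. \<exists>l\<in>C. lit_val (\<lambda>v. if v \<in> exist F then f v a else a v) l))"

type_synonym 'v passign = "'v \<Rightarrow> (('v \<Rightarrow> bool) \<Rightarrow> bool) option"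

definition apply_passign :: "'v passign \<Rightarrow> ('v \<Rightarrow> bool) \<Rightarrow> 'v \<Rightarrow> bool" where
  "apply_passign \<phi> a v = (case \<phi> v of Some g \<Rightarrow> g a | None \<Rightarrow> a v)"

definition autarky :: "'v passign \<Rightarrow> 'v dqcnf \<Rightarrow> bool" where
  "autarky \<phi> F \<longleftrightarrow> dom \<phi> \<subseteq> exist F
     \<and> (\<forall>y g. \<phi> y = Some g \<longrightarrow> depends_only (dep F y) g)
     \<and> (\<forall>C\<in>matrix F. (\<exists>l\<in>C. lit_var l \<in> dom \<phi>) \<longrightarrow>
          (\<forall>a. \<exists>l\<in>C. lit_val (apply_passign \<phi> a) l))"

definition apply_autarky :: "'v passign \<Rightarrow> 'v dqcnf \<Rightarrow> 'v dqcnf" where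
  "apply_autarky \<phi> F = F\<lparr>matrix := {C \<in> matrix F. \<forall>l\<in>C. lit_var l \<notin> dom \<phi>}\<rparr>"

end

theory Submission
  imports Defs
begin

text \<open>Removing clauses preserves satisfiability. Conversely, take Skolem functions for
  \<open>\<phi> * F\<close> and override them on \<open>dom \<phi>\<close> by the functions of the autarky. A clause untouched by
  \<open>\<phi>\<close> keeps its satisfying literal, since that literal's variable is not overridden. A clause
  touched by \<open>\<phi>\<close> is satisfied by \<open>\<phi>\<close> under every assignment of the remaining variables, in
  particular under the one the other Skolem functions produce; and since the functions of \<open>\<phi>\<close>
  read only universal variables, their values there are the same as in the Skolem model.\<close>

definition skolem_val :: "'v dqcnf \<Rightarrow> ('v \<Rightarrow> ('v \<Rightarrow> bool) \<Rightarrow> bool) \<Rightarrow> ('v \<Rightarrow> bool) \<Rightarrow> 'v \<Rightarrow> bool"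
  where "skolem_val F f a v = (if v \<in> exist F then f v a else a v)"

lemma skolem_val_matrix_update [simp]: "skolem_val (F\<lparr>matrix := M\<rparr>) = skolem_val F"
  unfolding skolem_val_def by simp

definition skolem_model :: "'v dqcnf \<Rightarrow> ('v \<Rightarrow> ('v \<Rightarrow> bool) \<Rightarrow> bool) \<Rightarrow> bool" where
  "skolem_model F f \<longleftrightarrow> (\<forall>y\<in>exist F. depends_only (dep F y) (f y))
     \<and> (\<forall>C\<in>matrix F. \<forall>a. \<exists>l\<in>C. lit_val (skolem_val F f a) l)"

lemma satisfiable_iff_skolem_model: "satisfiable F \<longleftrightarrow> (\<exists>f. skolem_model F f)"
  unfolding satisfiable_def skolem_model_def skolem_val_def ..

lemma skolem_model_matrix_subset:
  assumes "skolem_model F f" and "M \<subseteq> matrix F"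
  shows "skolem_model (F\<lparr>matrix := M\<rparr>) f"
  using assms unfolding skolem_model_def by auto

lemma lit_val_cong: "\<sigma> (lit_var l) = \<tau> (lit_var l) \<Longrightarrow> lit_val \<sigma> l = lit_val \<tau> l"
  by (cases l) auto

lemma depends_only_skolem_val:
  assumes "wf_dqcnf F" and "y \<in> exist F" and "depends_only (dep F y) g"
  shows "g (skolem_val F f a) = g a"
proof -
  have "dep F y \<inter> exist F = {}"
    using assms(1,2) unfolding wf_dqcnf_def by blast
  then have "\<forall>x\<in>dep F y. skolem_val F f a x = a x"
    unfolding skolem_val_def by auto
  then show ?thesis
    using assms(3) unfolding depends_only_def by blast
qed

definition skolem_override :: "'v passign \<Rightarrow> ('v \<Rightarrow> ('v \<Rightarrow> bool) \<Rightarrow> bool) \<Rightarrow> 'v \<Rightarrow> ('v \<Rightarrow> bool) \<Rightarrow> bool"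
  where "skolem_override \<phi> f y = (case \<phi> y of Some g \<Rightarrow> g | None \<Rightarrow> f y)"

lemma skolem_override_outside_dom: "y \<notin> dom \<phi> \<Longrightarrow> skolem_override \<phi> f y = f y"
  unfolding skolem_override_def by (auto split: option.split)

lemma apply_passign_skolem_val:
  assumes "wf_dqcnf F" and "autarky \<phi> F"
  shows "apply_passign \<phi> (skolem_val F f a) = skolem_val F (skolem_override \<phi> f) a"
proof
  fix v
  show "apply_passign \<phi> (skolem_val F f a) v = skolem_val F (skolem_override \<phi> f) a v"
  proof (cases "\<phi> v")
    case None
    then show ?thesis
      unfolding apply_passign_def skolem_val_def skolem_override_def by simp
  next
    case (Some g)
    with assms(2) have "v \<in> exist F" and "depends_only (dep F v) g"
      unfolding autarky_def by auto
    with Some show ?thesis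
      using depends_only_skolem_val[OF assms(1)]
      unfolding apply_passign_def skolem_override_def by (simp add: skolem_val_def)
  qed
qed

lemma skolem_model_skolem_override:
  assumes "wf_dqcnf F" and "autarky \<phi> F" and model: "skolem_model (apply_autarky \<phi> F) f"
  shows "skolem_model F (skolem_override \<phi> f)"
  unfolding skolem_model_def
proof (intro conjI ballI allI)
  fix y assume "y \<in> exist F"
  then show "depends_only (dep F y) (skolem_override \<phi> f y)"
    using assms(2,3) unfolding autarky_def skolem_model_def apply_autarky_def skolem_override_def
    by (auto split: option.split)
next
  fix C a assume C: "C \<in> matrix F"
  show "\<exists>l\<in>C. lit_val (skolem_val F (skolem_override \<phi> f) a) l"
  proof (cases "\<exists>l\<in>C. lit_var l \<in> dom \<phi>")
    case True
    with assms(2) C have "\<exists>l\<in>C. lit_val (apply_passign \<phi> (skolem_val F f a)) l"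
      unfolding autarky_def by blast
    then show ?thesis
      by (simp add: apply_passign_skolem_val[OF assms(1,2)])
  next
    case False
    with C model obtain l where "l \<in> C" and l: "lit_val (skolem_val F f a) l"
      unfolding skolem_model_def apply_autarky_def by fastforce
    moreover have "lit_var l \<notin> dom \<phi>"
      using False \<open>l \<in> C\<close> by blast
    ultimately show ?thesis
      by (metis lit_val_cong skolem_val_def skolem_override_outside_dom)
  qed
qed

theorem lemma1:
  fixes F :: "'v dqcnf" and \<phi> :: "'v passign"
  assumes "wf_dqcnf F" and "autarky \<phi> F"
  shows "satisfiable (apply_autarky \<phi> F) \<longleftrightarrow> satisfiable F"
proof
  assume "satisfiable (apply_autarky \<phi> F)"
  then show "satisfiable F"
    using skolem_model_skolem_override[OF assms] by (auto simp: satisfiable_iff_skolem_model)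
next
  assume "satisfiable F"
  then show "satisfiable (apply_autarky \<phi> F)"
    unfolding satisfiable_iff_skolem_model apply_autarky_def
    by (auto intro: skolem_model_matrix_subset)
qed

end
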